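(* Let $\gamma>0$, $k,L>0$, $(g,o)$ a rooted graph and $\varepsilon>0$. For $N$ large enough, $$\mathbb{P}_{N,\gamma}\Big(\Big|\frac{\#\{i\in[N]:B^L_{(G_N,i)}(k)\simeq(g,o)\}}{N}-\mu^L_\gamma(k,(g,o))\Big|>\varepsilon\Big)<2\exp\Big\{-\frac{\varepsilon^2N}{8kL+2}\Big\},$$ where $\mu^L_\gamma(k,(g,o))=\mathbb{P}_\gamma\big(B^L_{(G,0)}(k)\simeq(g,o)\big)$.
   Context: Graphs are locally finite with vertex set in $\mathbb{Z}$; $d_g$ is graph distance; the length of an edge $\{i,j\}$ is $|i-j|$. $\mathbb{P}_{N,\gamma}$ is the law of the random graph $G_N$ on $[N]=\{1,\dots,N\}$ containing all edges $\{x,x+1\}$ and each other pair $\{x,y\}$ independently with probability $\exp\{-|x-y|^\gamma\}$; $\mathbb{P}_\gamma$ is the analogous law of a random graph $G$ on vertex set $\mathbb{Z}$. A rooted graph is $(g,o)$ with $o$ a vertex of $g$; $(g,o)\simeq(g',o')$ if the translation $x\mapsto x-o+o'$ maps $g$ exactly onto $g'$. $B_{(g,o)}(k)$ is the subgraph of $g$ induced on $\{x:d_g(o,x)\le k\}$, rooted at $o$; the truncated ball $B^L_{(g,o)}(k)$ is $B_{(g',o)}(k)$ where $g'$ is $g$ with all edges of length larger than $L$ removed. *)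

theory Defs
  imports "HOL-Probability.Probability"
begin

text \<open>A graph on a vertex set contained in the integers: a pair (V, E) with
  E a set of edges, each edge a two-element subset of V.\<close>
type_synonym igraph = "int set \<times> int set set"

definition elen :: "int set \<Rightarrow> nat" where
  "elen e = nat (Max e - Min e)"

definition is_rooted_graph :: "igraph \<Rightarrow> int \<Rightarrow> bool" where
  "is_rooted_graph g r \<longleftrightarrow> r \<in> fst g \<and>
     (\<forall>e\<in>snd g. e \<subseteq> fst g \<and> card e = 2) \<and>
     (\<forall>x\<in>fst g. finite {e\<in>snd g. x \<in> e})"

fun ball_verts :: "int set set \<Rightarrow> int \<Rightarrow> nat \<Rightarrow> int set" where
  "ball_verts E r 0 = {r}"
| "ball_verts E r (Suc k) = ball_verts E r k \<union> {y. \<exists>x\<in>ball_verts E r k. {x, y} \<in> E}"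

definition ball :: "igraph \<Rightarrow> int \<Rightarrow> nat \<Rightarrow> igraph" where
  "ball g r k = (let S = ball_verts (snd g) r k in (S, {e\<in>snd g. e \<subseteq> S}))"

definition trunc_ball :: "nat \<Rightarrow> igraph \<Rightarrow> int \<Rightarrow> nat \<Rightarrow> igraph" where
  "trunc_ball L g r k = ball (fst g, {e\<in>snd g. elen e \<le> L}) r k"

definition rooted_iso :: "igraph \<Rightarrow> int \<Rightarrow> igraph \<Rightarrow> int \<Rightarrow> bool" where
  "rooted_iso g r g' r' \<longleftrightarrow>
     (\<lambda>x. x - r + r') ` fst g = fst g' \<and>
     (\<lambda>e. (\<lambda>x. x - r + r') ` e) ` snd g = snd g'"

text \<open>Nearest-neighbour edges inside V (always present).\<close>
definition nn_edges :: "int set \<Rightarrow> int set set" where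
  "nn_edges V = {{x, x + 1} | x. x \<in> V \<and> x + 1 \<in> V}"

definition pairs_fin :: "nat \<Rightarrow> int set set" where
  "pairs_fin N = {{x, y} | x y. 1 \<le> x \<and> x + 2 \<le> y \<and> y \<le> int N}"

definition pairs_Z :: "int set set" where
  "pairs_Z = {{x, y} | x y. x + 2 \<le> y}"

definition edge_prob :: "real \<Rightarrow> int set \<Rightarrow> real" where
  "edge_prob \<gamma> e = exp (- (real (elen e) powr \<gamma>))"

definition edge_law :: "real \<Rightarrow> int set set \<Rightarrow> (int set \<Rightarrow> bool) measure" where
  "edge_law \<gamma> P = PiM P (\<lambda>e. measure_pmf (bernoulli_pmf (edge_prob \<gamma> e)))"

text \<open>G_N (law P_{N,gamma}) and G (law P_gamma) as functions of the edge indicators.\<close>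
definition G_N :: "nat \<Rightarrow> (int set \<Rightarrow> bool) \<Rightarrow> igraph" where
  "G_N N \<omega> = ({1..int N}, nn_edges {1..int N} \<union> {e\<in>pairs_fin N. \<omega> e})"

definition G_Z :: "(int set \<Rightarrow> bool) \<Rightarrow> igraph" where
  "G_Z \<omega> = (UNIV, nn_edges UNIV \<union> {e\<in>pairs_Z. \<omega> e})"

definition P_N :: "nat \<Rightarrow> real \<Rightarrow> (int set \<Rightarrow> bool) measure" where
  "P_N N \<gamma> = edge_law \<gamma> (pairs_fin N)"

definition P_Z :: "real \<Rightarrow> (int set \<Rightarrow> bool) measure" where
  "P_Z \<gamma> = edge_law \<gamma> pairs_Z"

definition mu :: "real \<Rightarrow> nat \<Rightarrow> nat \<Rightarrow> igraph \<Rightarrow> int \<Rightarrow> real" where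
  "mu \<gamma> L k g r = measure (P_Z \<gamma>)
     {\<omega> \<in> space (P_Z \<gamma>). rooted_iso (trunc_ball L (G_Z \<omega>) 0 k) 0 g r}"

definition count_iso :: "nat \<Rightarrow> nat \<Rightarrow> nat \<Rightarrow> igraph \<Rightarrow> int \<Rightarrow> (int set \<Rightarrow> bool) \<Rightarrow> nat" where
  "count_iso N L k g r \<omega> =
     card {i\<in>{1..int N}. rooted_iso (trunc_ball L (G_N N \<omega>) i k) i g r}"

end

theory Submission
  imports Defs
begin

text \<open>Once edges longer than \<open>L\<close> are removed, the \<open>k\<close>-ball around a site \<open>i\<close> only sees the
  edges inside the window \<open>[i - kL, i + kL]\<close>. For a site at distance more than \<open>kL\<close> from the
  boundary of \<open>[N]\<close> the edges of \<open>G\<^sub>N\<close> in this window have, after translation by \<open>-i\<close>, the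
  same law as those of \<open>G\<close> around \<open>0\<close>; so the expected count is \<open>N \<mu>\<close> up to a boundary error
  of \<open>2kL\<close>. Sites in the same residue class modulo \<open>2kL + 1\<close> have disjoint windows, so their
  indicators are independent and Hoeffding's inequality applies within each class; a union
  bound over the \<open>2kL + 1\<close> classes gives the estimate once \<open>N\<close> is large.\<close>

section \<open>Locality of truncated balls\<close>

definition window :: "int \<Rightarrow> int \<Rightarrow> int set" where
  "window R i = {i - R .. i + R}"

lemma elen_doubleton: "elen {x, y} = nat \<bar>x - y\<bar>"
  unfolding elen_def by (simp add: max_def min_def abs_if)

lemma ball_verts_subset_window:
  assumes "\<forall>e\<in>F. elen e \<le> L"
  shows "ball_verts F r j \<subseteq> window (int j * int L) r"
proof (induction j)
  case 0
  then show ?case by (simp add: window_def)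
next
  case (Suc j)
  have "y \<in> window (int (Suc j) * int L) r" if "x \<in> ball_verts F r j" "{x, y} \<in> F" for x y
  proof -
    have "\<bar>x - y\<bar> \<le> int L"
      using assms that(2) by (auto simp: elen_doubleton)
    moreover have "x \<in> window (int j * int L) r"
      using Suc.IH that(1) by blast
    ultimately show ?thesis
      by (auto simp: window_def algebra_simps abs_le_iff)
  qed
  moreover have "window (int j * int L) r \<subseteq> window (int (Suc j) * int L) r"
    by (auto simp: window_def algebra_simps)
  ultimately show ?case
    using Suc.IH by auto
qed

lemma ball_verts_restrict_window:
  assumes short: "\<forall>e\<in>F. elen e \<le> L" and "j \<le> k"
  shows "ball_verts {e\<in>F. e \<subseteq> window (int k * int L) r} r j = ball_verts F r j"
  using \<open>j \<le> k\<close>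
proof (induction j)
  case 0
  then show ?case by simp
next
  case (Suc j)
  have edge_in_window: "{x, y} \<subseteq> window (int k * int L) r"
    if "x \<in> ball_verts F r j" "{x, y} \<in> F" for x y
  proof -
    have "x \<in> window (int j * int L) r"
      using ball_verts_subset_window[OF short] that(1) by blast
    moreover have "\<bar>x - y\<bar> \<le> int L"
      using short that(2) by (auto simp: elen_doubleton)
    moreover have "int (Suc j) * int L \<le> int k * int L"
      using Suc.prems by (intro mult_right_mono) auto
    ultimately show ?thesis
      by (auto simp: window_def algebra_simps abs_le_iff)
  qed
  show ?case
    using Suc edge_in_window by auto
qed

lemma trunc_ball_local:
  assumes "\<And>e. e \<subseteq> window (int k * int L) r \<Longrightarrow> e \<in> E \<longleftrightarrow> e \<in> E'"
  shows "trunc_ball L (V, E) r k = trunc_ball L (V', E') r k"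
proof -
  define W where "W = window (int k * int L) r"
  define F where "F = {e\<in>E. elen e \<le> L}"
  define F' where "F' = {e\<in>E'. elen e \<le> L}"
  have short: "\<forall>e\<in>F. elen e \<le> L" "\<forall>e\<in>F'. elen e \<le> L"
    by (auto simp: F_def F'_def)
  have same_in_window: "{e\<in>F. e \<subseteq> W} = {e\<in>F'. e \<subseteq> W}"
    using assms by (auto simp: F_def F'_def W_def)
  have verts: "ball_verts F r k = ball_verts F' r k"
    using ball_verts_restrict_window[OF short(1), of k k r]
      ball_verts_restrict_window[OF short(2), of k k r] same_in_window
    by (simp add: W_def)
  moreover have "ball_verts F r k \<subseteq> W"
    unfolding W_def by (rule ball_verts_subset_window[OF short(1)])
  ultimately have "{e\<in>F. e \<subseteq> ball_verts F r k} = {e\<in>F'. e \<subseteq> ball_verts F' r k}"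
    using same_in_window by blast
  with verts show ?thesis
    by (simp add: trunc_ball_def ball_def F_def F'_def)
qed

section \<open>Translation invariance\<close>

definition translate :: "int \<Rightarrow> int set \<Rightarrow> int set" where
  "translate c e = (+) c ` e"

lemma translate_translate: "translate c (translate d e) = translate (c + d) e"
  unfolding translate_def image_image by (simp add: add.assoc)

lemma translate_0 [simp]: "translate 0 e = e"
  by (simp add: translate_def)

lemma translate_doubleton [simp]: "translate c {x, y} = {c + x, c + y}"
  by (simp add: translate_def)

lemma mem_translate_image_iff: "e \<in> translate c ` F \<longleftrightarrow> translate (- c) e \<in> F"
  by (force simp: translate_translate intro: image_eqI[of _ _ "translate (- c) e"])

lemma elen_translate:
  assumes "finite e" "e \<noteq> {}"
  shows "elen (translate c e) = elen e"
proof -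
  have "Max (translate c e) = c + Max e" "Min (translate c e) = c + Min e"
    unfolding translate_def using assms
    by (auto intro!: hom_Max_commute[symmetric] hom_Min_commute[symmetric] simp: max_def min_def)
  then show ?thesis
    by (simp add: elen_def)
qed

lemma ball_verts_translate:
  "ball_verts (translate c ` F) (c + r) j = (+) c ` ball_verts F r j"
proof (induction j)
  case 0
  then show ?case by simp
next
  case (Suc j)
  have "{y. \<exists>x\<in>(+) c ` ball_verts F r j. {x, y} \<in> translate c ` F}
      = (+) c ` {y. \<exists>x\<in>ball_verts F r j. {x, y} \<in> F}"
    by (force simp: mem_translate_image_iff intro: image_eqI[of _ _ "y - c" for y])
  with Suc show ?case
    by (simp add: image_Un)
qed

lemma trunc_ball_translate:
  assumes "\<forall>e\<in>E. finite e \<and> e \<noteq> {}"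
  shows "trunc_ball L (V', translate c ` E) (c + r) k
    = ((+) c ` fst (trunc_ball L (V, E) r k), translate c ` snd (trunc_ball L (V, E) r k))"
proof -
  define F where "F = {e\<in>E. elen e \<le> L}"
  define S where "S = ball_verts F r k"
  have short: "{e \<in> translate c ` E. elen e \<le> L} = translate c ` F"
    using assms by (auto simp: F_def elen_translate)
  have verts: "ball_verts (translate c ` F) (c + r) k = (+) c ` S"
    unfolding S_def by (rule ball_verts_translate)
  have "{e \<in> translate c ` F. e \<subseteq> (+) c ` S} = translate c ` {e \<in> F. e \<subseteq> S}"
    by (auto simp: translate_def inj_image_subset_iff)
  with short verts show ?thesis
    by (simp add: trunc_ball_def ball_def Let_def F_def S_def)
qed

lemma rooted_iso_translate:
  "rooted_iso ((+) c ` V, translate c ` E) c g r \<longleftrightarrow> rooted_iso (V, E) 0 g r"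
  unfolding rooted_iso_def translate_def by (simp add: image_image)

section \<open>Reduction to a window around the root\<close>

definition centred_pairs :: "int \<Rightarrow> int set set" where
  "centred_pairs R = {e\<in>pairs_Z. e \<subseteq> window R 0}"

definition local_pairs :: "nat \<Rightarrow> int \<Rightarrow> int \<Rightarrow> int set set" where
  "local_pairs N R i = {e\<in>pairs_fin N. e \<subseteq> window R i}"

text \<open>For \<open>R = k L\<close> the truncated \<open>k\<close>-ball at \<open>0\<close> of this graph is that of \<open>G\<close> and, after
  translation, that of \<open>G\<^sub>N\<close> at every site at distance more than \<open>R\<close> from the boundary.\<close>
definition window_graph :: "int \<Rightarrow> (int set \<Rightarrow> bool) \<Rightarrow> igraph" where
  "window_graph R \<phi> = (UNIV, nn_edges UNIV \<union> {e\<in>centred_pairs R. \<phi> e})"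

lemma translate_nn_edges_UNIV: "translate c ` nn_edges UNIV = nn_edges UNIV"
proof (intro set_eqI iffI)
  fix e
  assume "e \<in> translate c ` nn_edges UNIV"
  then obtain x where "e = {c + x, c + x + 1}"
    by (auto simp: nn_edges_def add.assoc)
  then show "e \<in> nn_edges UNIV"
    unfolding nn_edges_def by blast
next
  fix e
  assume "e \<in> nn_edges UNIV"
  then obtain x where "e = translate c {x - c, x - c + 1}"
    by (auto simp: nn_edges_def)
  then show "e \<in> translate c ` nn_edges UNIV"
    unfolding nn_edges_def by blast
qed

lemma nn_edges_local: "e \<subseteq> V \<Longrightarrow> e \<in> nn_edges V \<longleftrightarrow> e \<in> nn_edges UNIV"
  unfolding nn_edges_def by auto

lemma pairs_fin_window_iff:
  assumes "R + 1 \<le> i" "i + R \<le> int N" "e \<subseteq> window R i"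
  shows "e \<in> pairs_fin N \<longleftrightarrow> e \<in> translate i ` centred_pairs R"
proof
  assume "e \<in> pairs_fin N"
  then obtain x y where e: "e = {x, y}" "x + 2 \<le> y"
    by (auto simp: pairs_fin_def)
  then have "{x - i, y - i} \<in> centred_pairs R"
    using assms(3) by (force simp: centred_pairs_def pairs_Z_def window_def)
  moreover have "e = translate i {x - i, y - i}"
    by (simp add: e)
  ultimately show "e \<in> translate i ` centred_pairs R"
    by blast
next
  assume "e \<in> translate i ` centred_pairs R"
  then obtain x y where e: "e = {i + x, i + y}" "x + 2 \<le> y" "- R \<le> x" "y \<le> R"
    by (auto simp: centred_pairs_def pairs_Z_def window_def)
  then show "e \<in> pairs_fin N"
    using assms(1,2) unfolding pairs_fin_def by (intro CollectI exI[of _ "i + x"] exI[of _ "i + y"]) auto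
qed

lemma window_graph_edges_finite_nonempty: "\<forall>e\<in>snd (window_graph R \<phi>). finite e \<and> e \<noteq> {}"
  by (auto simp: window_graph_def nn_edges_def centred_pairs_def pairs_Z_def)

definition window_ball_iso :: "nat \<Rightarrow> nat \<Rightarrow> igraph \<Rightarrow> int \<Rightarrow> (int set \<Rightarrow> bool) \<Rightarrow> bool" where
  "window_ball_iso L k g r \<phi> =
     rooted_iso (trunc_ball L (window_graph (int k * int L) \<phi>) 0 k) 0 g r"

definition ball_iso_at :: "nat \<Rightarrow> nat \<Rightarrow> nat \<Rightarrow> igraph \<Rightarrow> int \<Rightarrow> int \<Rightarrow> (int set \<Rightarrow> bool) \<Rightarrow> bool" where
  "ball_iso_at N L k g r i \<omega> = rooted_iso (trunc_ball L (G_N N \<omega>) i k) i g r"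

lemma trunc_ball_G_Z_eq_window:
  "trunc_ball L (G_Z \<omega>) 0 k
    = trunc_ball L (window_graph (int k * int L) (restrict \<omega> (centred_pairs (int k * int L)))) 0 k"
  unfolding G_Z_def window_graph_def
  by (rule trunc_ball_local) (auto simp: centred_pairs_def)

lemma ball_iso_at_restrict:
  "ball_iso_at N L k g r i (restrict \<omega> (local_pairs N (int k * int L) i)) = ball_iso_at N L k g r i \<omega>"
proof -
  have "trunc_ball L (G_N N (restrict \<omega> (local_pairs N (int k * int L) i))) i k
      = trunc_ball L (G_N N \<omega>) i k"
    unfolding G_N_def by (rule trunc_ball_local) (auto simp: local_pairs_def)
  then show ?thesis
    by (simp add: ball_iso_at_def)
qed

lemma ball_iso_at_interior:
  assumes "int k * int L + 1 \<le> i" "i + int k * int L \<le> int N"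
  shows "ball_iso_at N L k g r i \<omega> \<longleftrightarrow>
    window_ball_iso L k g r (\<lambda>e\<in>centred_pairs (int k * int L). \<omega> (translate i e))"
proof -
  define R where "R = int k * int L"
  define \<phi> where "\<phi> = (\<lambda>e\<in>centred_pairs R. \<omega> (translate i e))"
  define T where "T = trunc_ball L (window_graph R \<phi>) 0 k"
  have "translate i ` {e\<in>centred_pairs R. \<phi> e} = {e \<in> translate i ` centred_pairs R. \<omega> e}"
    by (auto simp: \<phi>_def)
  then have edges: "translate i ` snd (window_graph R \<phi>)
      = nn_edges UNIV \<union> {e \<in> translate i ` centred_pairs R. \<omega> e}"
    by (simp add: window_graph_def image_Un translate_nn_edges_UNIV)
  have inside: "window R i \<subseteq> {1..int N}"
    using assms by (auto simp: window_def R_def)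
  have "trunc_ball L (G_N N \<omega>) i k = trunc_ball L (UNIV, translate i ` snd (window_graph R \<phi>)) i k"
    unfolding G_N_def edges
  proof (rule trunc_ball_local)
    fix e
    assume "e \<subseteq> window (int k * int L) i"
    then have e: "e \<subseteq> window R i"
      by (simp add: R_def)
    have "e \<in> nn_edges {1..int N} \<longleftrightarrow> e \<in> nn_edges UNIV"
      using e inside by (intro nn_edges_local) blast
    moreover have "e \<in> pairs_fin N \<longleftrightarrow> e \<in> translate i ` centred_pairs R"
      using assms e by (intro pairs_fin_window_iff) (auto simp: R_def)
    ultimately show "e \<in> nn_edges {1..int N} \<union> {e \<in> pairs_fin N. \<omega> e}
        \<longleftrightarrow> e \<in> nn_edges UNIV \<union> {e \<in> translate i ` centred_pairs R. \<omega> e}"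
      by blast
  qed
  also have "\<dots> = ((+) i ` fst T, translate i ` snd T)"
    using trunc_ball_translate[OF window_graph_edges_finite_nonempty,
        where V = "fst (window_graph R \<phi>)" and V' = UNIV and c = i and r = 0]
    by (simp add: T_def)
  finally show ?thesis
    by (simp add: ball_iso_at_def window_ball_iso_def rooted_iso_translate T_def R_def \<phi>_def)
qed

abbreviation edge_coin :: "real \<Rightarrow> int set \<Rightarrow> bool measure" where
  "edge_coin \<gamma> e \<equiv> measure_pmf (bernoulli_pmf (edge_prob \<gamma> e))"

lemma space_edge_law: "space (edge_law \<gamma> W) = W \<rightarrow>\<^sub>E UNIV"
  by (simp add: edge_law_def space_PiM)

lemma prob_space_edge_law: "prob_space (edge_law \<gamma> W)"
  unfolding edge_law_def by (intro prob_space_PiM measure_pmf.prob_space_axioms)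

lemma sets_edge_law_finite:
  assumes "finite W"
  shows "sets (edge_law \<gamma> W) = Pow (space (edge_law \<gamma> W))"
proof -
  have "sets (edge_law \<gamma> W) = sets (PiM W (\<lambda>_. count_space (UNIV :: bool set)))"
    unfolding edge_law_def by (intro sets_PiM_cong) auto
  also have "PiM W (\<lambda>_. count_space (UNIV :: bool set)) = count_space (W \<rightarrow>\<^sub>E UNIV)"
    using assms by (intro count_space_PiM_finite) auto
  finally show ?thesis
    by (simp add: space_edge_law)
qed

lemma measurable_edge_law_finite:
  assumes "finite W" "f \<in> space (edge_law \<gamma> W) \<rightarrow> space M"
  shows "f \<in> edge_law \<gamma> W \<rightarrow>\<^sub>M M"
proof -
  have "f \<in> count_space (space (edge_law \<gamma> W)) \<rightarrow>\<^sub>M M"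
    using assms(2) by (simp add: measurable_count_space_eq1)
  moreover have "sets (count_space (space (edge_law \<gamma> W))) = sets (edge_law \<gamma> W)"
    using sets_edge_law_finite[OF assms(1)] by simp
  ultimately show ?thesis
    using measurable_cong_sets by blast
qed

lemma finite_pairs_fin: "finite (pairs_fin N)"
  by (rule finite_subset[of _ "Pow {1..int N}"]) (auto simp: pairs_fin_def)

lemma finite_centred_pairs: "finite (centred_pairs R)"
  by (rule finite_subset[of _ "Pow (window R 0)"]) (auto simp: centred_pairs_def window_def)

lemma finite_local_pairs: "finite (local_pairs N R i)"
  using finite_pairs_fin by (rule rev_finite_subset) (auto simp: local_pairs_def)

lemma measure_edge_law_reindex:
  assumes "finite W'" "inj_on t W'" "t ` W' \<subseteq> W"
    and "\<And>e. e \<in> W' \<Longrightarrow> edge_prob \<gamma> (t e) = edge_prob \<gamma> e"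
  shows "measure (edge_law \<gamma> W) {\<omega> \<in> space (edge_law \<gamma> W). P (\<lambda>e\<in>W'. \<omega> (t e))}
    = measure (edge_law \<gamma> W') {\<phi> \<in> space (edge_law \<gamma> W'). P \<phi>}"
proof -
  let ?T = "\<lambda>\<omega>. \<lambda>e\<in>W'. \<omega> (t e)"
  have law: "PiM W' (\<lambda>e. edge_coin \<gamma> (t e)) = edge_law \<gamma> W'"
    unfolding edge_law_def by (rule PiM_cong) (simp_all add: assms(4))
  have distr: "distr (edge_law \<gamma> W) (edge_law \<gamma> W') ?T = edge_law \<gamma> W'"
    using distr_PiM_reindex[of W "edge_coin \<gamma>" t W'] assms(2,3) law
    by (auto simp: edge_law_def measure_pmf.prob_space_axioms)
  have meas: "?T \<in> edge_law \<gamma> W \<rightarrow>\<^sub>M edge_law \<gamma> W'"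
    unfolding law[symmetric] unfolding edge_law_def using assms(3)
    by (intro measurable_restrict measurable_component_singleton) auto
  have "{\<phi> \<in> space (edge_law \<gamma> W'). P \<phi>} \<in> sets (edge_law \<gamma> W')"
    using sets_edge_law_finite[OF assms(1)] by auto
  from measure_distr[OF meas this] distr show ?thesis
    by (simp add: vimage_def Int_def space_edge_law conj_commute)
qed

lemma mu_eq_window_prob:
  "mu \<gamma> L k g r = measure (edge_law \<gamma> (centred_pairs (int k * int L)))
     {\<phi> \<in> space (edge_law \<gamma> (centred_pairs (int k * int L))). window_ball_iso L k g r \<phi>}"
proof -
  define W where "W = centred_pairs (int k * int L)"
  have "mu \<gamma> L k g r = measure (edge_law \<gamma> pairs_Z)
      {\<omega> \<in> space (edge_law \<gamma> pairs_Z). window_ball_iso L k g r (\<lambda>e\<in>W. \<omega> (id e))}"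
    by (simp add: mu_def P_Z_def W_def window_ball_iso_def trunc_ball_G_Z_eq_window)
  also have "\<dots> = measure (edge_law \<gamma> W) {\<phi> \<in> space (edge_law \<gamma> W). window_ball_iso L k g r \<phi>}"
    by (rule measure_edge_law_reindex) (auto simp: W_def finite_centred_pairs, auto simp: centred_pairs_def)
  finally show ?thesis
    by (simp add: W_def)
qed

lemma prob_ball_iso_at_interior:
  assumes "int k * int L + 1 \<le> i" "i + int k * int L \<le> int N"
  shows "measure (P_N N \<gamma>) {\<omega> \<in> space (P_N N \<gamma>). ball_iso_at N L k g r i \<omega>} = mu \<gamma> L k g r"
proof -
  define R where "R = int k * int L"
  have "translate i ` centred_pairs R \<subseteq> pairs_fin N"
  proof
    fix e
    assume e: "e \<in> translate i ` centred_pairs R"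
    then have "e \<subseteq> window R i"
      by (auto simp: centred_pairs_def window_def translate_def)
    with assms e show "e \<in> pairs_fin N"
      using pairs_fin_window_iff[of R i N e] by (simp add: R_def)
  qed
  moreover have "inj_on (translate i) (centred_pairs R)"
    by (rule inj_onI) (metis translate_0 translate_translate add.left_inverse)
  moreover have "edge_prob \<gamma> (translate i e) = edge_prob \<gamma> e" if "e \<in> centred_pairs R" for e
    using that by (auto simp: edge_prob_def elen_doubleton centred_pairs_def pairs_Z_def)
  ultimately have "measure (P_N N \<gamma>) {\<omega> \<in> space (P_N N \<gamma>).
        window_ball_iso L k g r (\<lambda>e\<in>centred_pairs R. \<omega> (translate i e))}
      = measure (edge_law \<gamma> (centred_pairs R))
          {\<phi> \<in> space (edge_law \<gamma> (centred_pairs R)). window_ball_iso L k g r \<phi>}"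
    unfolding P_N_def by (intro measure_edge_law_reindex finite_centred_pairs)
  then show ?thesis
    using assms by (simp add: ball_iso_at_interior mu_eq_window_prob R_def)
qed

lemma indep_vars_edge_coordinates:
  assumes "W \<noteq> {}"
  shows "prob_space.indep_vars (edge_law \<gamma> W) (edge_coin \<gamma>) (\<lambda>e \<omega>. \<omega> e) W"
proof -
  interpret prob_space "edge_law \<gamma> W"
    by (rule prob_space_edge_law)
  have components: "random_variable (edge_coin \<gamma> e) (\<lambda>\<omega>. \<omega> e)" if "e \<in> W" for e
    unfolding edge_law_def using that by (rule measurable_component_singleton)
  have "distr (edge_law \<gamma> W) (PiM W (edge_coin \<gamma>)) (\<lambda>\<omega>. \<lambda>e\<in>W. \<omega> e)
      = distr (edge_law \<gamma> W) (edge_law \<gamma> W) (\<lambda>\<omega>. \<omega>)"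
    by (rule distr_cong) (auto simp: edge_law_def space_PiM)
  also have "\<dots> = edge_law \<gamma> W"
    by (rule distr_id)
  also have "\<dots> = PiM W (\<lambda>e. distr (edge_law \<gamma> W) (edge_coin \<gamma> e) (\<lambda>\<omega>. \<omega> e))"
    unfolding edge_law_def
    by (intro PiM_cong refl distr_PiM_component[symmetric]) (auto intro: measure_pmf.prob_space_axioms)
  finally show ?thesis
    using components by (subst indep_vars_iff_distr_eq_PiM'[OF assms]) auto
qed

section \<open>Independence of sites with disjoint windows\<close>

lemma disjoint_family_on_local_pairs:
  assumes "\<And>i j. i \<in> C \<Longrightarrow> j \<in> C \<Longrightarrow> i \<noteq> j \<Longrightarrow> 2 * R + 1 \<le> \<bar>i - j\<bar>"
  shows "disjoint_family_on (local_pairs N R) C"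
  unfolding disjoint_family_on_def
proof (intro ballI impI, rule ccontr)
  fix i j
  assume ij: "i \<in> C" "j \<in> C" "i \<noteq> j" and "local_pairs N R i \<inter> local_pairs N R j \<noteq> {}"
  then obtain e where e: "e \<in> pairs_fin N" "e \<subseteq> window R i" "e \<subseteq> window R j"
    by (auto simp: local_pairs_def)
  then obtain x where "x \<in> e"
    by (auto simp: pairs_fin_def)
  with e have "i - R \<le> x" "x \<le> i + R" "j - R \<le> x" "x \<le> j + R"
    by (auto simp: window_def)
  then have "\<bar>i - j\<bar> \<le> 2 * R"
    by (simp add: abs_le_iff)
  with assms[OF ij] show False
    by simp
qed

lemma indep_vars_ball_iso_at:
  assumes "pairs_fin N \<noteq> {}"
    and "\<And>i j. i \<in> C \<Longrightarrow> j \<in> C \<Longrightarrow> i \<noteq> j \<Longrightarrow> 2 * (int k * int L) + 1 \<le> \<bar>i - j\<bar>"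
  shows "prob_space.indep_vars (P_N N \<gamma>) (\<lambda>_. borel)
    (\<lambda>i \<omega>. of_bool (ball_iso_at N L k g r i \<omega>) :: real) C"
proof -
  interpret prob_space "edge_law \<gamma> (pairs_fin N)"
    by (rule prob_space_edge_law)
  define W where "W = local_pairs N (int k * int L)"
  have local: "W i \<subseteq> pairs_fin N" for i
    by (auto simp: W_def local_pairs_def)
  have disjoint: "disjoint_family_on W C"
    unfolding W_def by (rule disjoint_family_on_local_pairs) (rule assms(2))
  have "indep_vars (\<lambda>i. edge_law \<gamma> (W i)) (\<lambda>i \<omega>. restrict \<omega> (W i)) C"
    unfolding edge_law_def
    by (rule indep_vars_restrict[OF indep_vars_edge_coordinates[OF assms(1)], unfolded edge_law_def])
      (use local disjoint in auto)
  then have "indep_vars (\<lambda>_. borel)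
      (\<lambda>i \<omega>. of_bool (ball_iso_at N L k g r i (restrict \<omega> (W i))) :: real) C"
    by (rule indep_vars_compose2[where Y = "\<lambda>i \<phi>. of_bool (ball_iso_at N L k g r i \<phi>)"])
      (auto intro: measurable_edge_law_finite simp: W_def finite_local_pairs)
  then show ?thesis
    by (simp add: W_def ball_iso_at_restrict P_N_def)
qed

lemma (in prob_space) Hoeffding_abs_ge_unit_interval:
  fixes \<eta> :: real
  assumes "finite C" "C \<noteq> {}" "indep_vars (\<lambda>_. borel) X C"
    and "\<And>i x. i \<in> C \<Longrightarrow> X i x \<in> {0..1}" and "\<eta> \<ge> 0"
  shows "prob {x \<in> space M. \<eta> * card C \<le> \<bar>(\<Sum>i\<in>C. X i x) - (\<Sum>i\<in>C. expectation (X i))\<bar>}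
    \<le> 2 * exp (- 2 * \<eta>\<^sup>2 * card C)"
proof -
  interpret Hoeffding_ineq M C X "\<lambda>_. 0" "\<lambda>_. 1" "\<Sum>i\<in>C. expectation (X i)"
    by unfold_locales (use assms in auto)
  have card: "0 < real (card C)"
    using assms(1,2) by (simp add: card_gt_0_iff)
  have "prob {x \<in> space M. \<eta> * card C \<le> \<bar>(\<Sum>i\<in>C. X i x) - (\<Sum>i\<in>C. expectation (X i))\<bar>}
      \<le> 2 * exp (- 2 * (\<eta> * card C)\<^sup>2 / (\<Sum>i\<in>C. (1 - 0)\<^sup>2))"
    using assms(5) card by (intro Hoeffding_ineq_abs_ge) auto
  also have "- 2 * (\<eta> * card C)\<^sup>2 / (\<Sum>i\<in>C. (1 - 0)\<^sup>2) = - 2 * \<eta>\<^sup>2 * card C"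
    using card by (simp add: power2_eq_square)
  finally show ?thesis .
qed

section \<open>The expected count\<close>

lemma count_iso_eq_sum:
  "real (count_iso N L k g r \<omega>) = (\<Sum>i\<in>{1..int N}. of_bool (ball_iso_at N L k g r i \<omega>))"
  by (simp add: count_iso_def ball_iso_at_def sum.If_cases Int_def)

lemma expectation_ball_iso_at:
  "prob_space.expectation (P_N N \<gamma>) (\<lambda>\<omega>. of_bool (ball_iso_at N L k g r i \<omega>))
    = measure (P_N N \<gamma>) {\<omega> \<in> space (P_N N \<gamma>). ball_iso_at N L k g r i \<omega>}"
proof -
  interpret prob_space "P_N N \<gamma>"
    unfolding P_N_def by (rule prob_space_edge_law)
  have "integral\<^sup>L (P_N N \<gamma>) (\<lambda>\<omega>. of_bool (ball_iso_at N L k g r i \<omega>))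
      = integral\<^sup>L (P_N N \<gamma>) (indicator {\<omega> \<in> space (P_N N \<gamma>). ball_iso_at N L k g r i \<omega>})"
    by (rule Bochner_Integration.integral_cong) (auto simp: indicator_def)
  also have "\<dots> = measure (P_N N \<gamma>) {\<omega> \<in> space (P_N N \<gamma>). ball_iso_at N L k g r i \<omega>}"
    using sets_edge_law_finite[OF finite_pairs_fin, of \<gamma> N]
    by (simp add: P_N_def Bochner_Integration.integral_indicator)
  finally show ?thesis .
qed

lemma sum_prob_ball_iso_at_near_mu:
  "\<bar>(\<Sum>i\<in>{1..int N}. measure (P_N N \<gamma>) {\<omega> \<in> space (P_N N \<gamma>). ball_iso_at N L k g r i \<omega>})
      - real N * mu \<gamma> L k g r\<bar> \<le> 2 * real k * real L"
proof -
  define R where "R = int k * int L"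
  define S where "S = {1..int N}"
  define interior where "interior = {i\<in>S. R + 1 \<le> i \<and> i + R \<le> int N}"
  define f where "f i = measure (P_N N \<gamma>) {\<omega> \<in> space (P_N N \<gamma>). ball_iso_at N L k g r i \<omega>}
    - mu \<gamma> L k g r" for i
  interpret P_N: prob_space "P_N N \<gamma>"
    unfolding P_N_def by (rule prob_space_edge_law)
  interpret P_Z: prob_space "P_Z \<gamma>"
    unfolding P_Z_def by (rule prob_space_edge_law)
  have "0 \<le> mu \<gamma> L k g r" "mu \<gamma> L k g r \<le> 1"
    by (simp_all add: mu_def)
  moreover have "0 \<le> P_N.prob A" "P_N.prob A \<le> 1" for A
    by simp_all
  ultimately have f_bound: "\<bar>f i\<bar> \<le> 1" for i
    unfolding f_def abs_le_iff by (smt (verit))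
  have "f i = 0" if "i \<in> interior" for i
    using that by (simp add: f_def interior_def R_def prob_ball_iso_at_interior)
  moreover have "interior \<subseteq> S" "finite S"
    by (auto simp: interior_def S_def)
  ultimately have "(\<Sum>i\<in>S. f i) = (\<Sum>i\<in>S - interior. f i)"
    using sum.subset_diff[of interior S f] by simp
  also have "\<bar>\<dots>\<bar> \<le> (\<Sum>i\<in>S - interior. 1)"
    using sum_abs[of f] sum_mono[of "S - interior" "\<lambda>i. \<bar>f i\<bar>" "\<lambda>_. 1"] f_bound
    by (meson order_trans)
  also have "\<dots> \<le> card ({1..R} \<union> {int N - R + 1..int N})"
    by (simp, rule card_mono) (auto simp: S_def interior_def)
  also have "\<dots> \<le> 2 * nat R"
    using card_Un_le[of "{1..R}" "{int N - R + 1..int N}"] by simp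
  finally have "\<bar>\<Sum>i\<in>S. f i\<bar> \<le> 2 * nat R" .
  then show ?thesis
    by (simp add: f_def S_def R_def sum_subtractf)
qed

lemma residue_class_dist_ge:
  fixes i j m :: int
  assumes "0 < m" "i mod m = j mod m" "i \<noteq> j"
  shows "m \<le> \<bar>i - j\<bar>"
proof -
  have "m dvd i - j"
    using assms(2) by (simp add: mod_eq_dvd_iff)
  then show ?thesis
    using assms(1,3) dvd_imp_le_int[of "i - j" m] by simp
qed

definition residue_class :: "nat \<Rightarrow> nat \<Rightarrow> int \<Rightarrow> int set" where
  "residue_class N m c = {i\<in>{1..int N}. (i - 1) mod int m = c}"

lemma finite_residue_class: "finite (residue_class N m c)"
  unfolding residue_class_def by (rule finite_subset[of _ "{1..int N}"]) auto

lemma card_residue_class_ge: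
  assumes "0 < m" "0 \<le> c" "c < int m"
  shows "N div m \<le> card (residue_class N m c)"
proof -
  define f where "f j = 1 + c + int m * int j" for j
  have inj: "inj_on f {..<N div m}"
    using assms(1) by (auto intro: inj_onI simp: f_def)
  have "f j \<in> {i\<in>{1..int N}. (i - 1) mod int m = c}" if "j < N div m" for j
  proof -
    have "m * (j + 1) \<le> m * (N div m)"
      using that by (intro mult_left_mono) auto
    also have "\<dots> \<le> N"
      by simp
    finally have "m * j + m \<le> N"
      by (simp add: algebra_simps)
    then have "int m * int j + int m \<le> int N"
      by (metis of_nat_add of_nat_mult of_nat_le_iff)
    moreover have "(f j - 1) mod int m = c"
      using assms(2,3) by (simp add: f_def)
    ultimately show ?thesis
      using assms(2,3) by (simp add: f_def)
  qed
  then have "f ` {..<N div m} \<subseteq> residue_class N m c"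
    by (auto simp: residue_class_def)
  from card_inj_on_le[OF inj this finite_residue_class] show ?thesis
    by simp
qed

lemma abs_sum_less_if_classes:
  fixes f :: "'a \<Rightarrow> real" and \<eta> :: real
  assumes "finite S" "finite K" "K \<noteq> {}" "cl ` S \<subseteq> K"
    and "\<And>c. c \<in> K \<Longrightarrow> \<bar>\<Sum>i\<in>{i\<in>S. cl i = c}. f i\<bar> < \<eta> * card {i\<in>S. cl i = c}"
  shows "\<bar>\<Sum>i\<in>S. f i\<bar> < \<eta> * card S"
proof -
  have "\<bar>\<Sum>i\<in>S. f i\<bar> = \<bar>\<Sum>c\<in>K. \<Sum>i\<in>{i\<in>S. cl i = c}. f i\<bar>"
    using sum.group[OF assms(1,2,4), of f] by simp
  also have "\<dots> \<le> (\<Sum>c\<in>K. \<bar>\<Sum>i\<in>{i\<in>S. cl i = c}. f i\<bar>)"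
    by (rule sum_abs)
  also have "\<dots> < (\<Sum>c\<in>K. \<eta> * card {i\<in>S. cl i = c})"
    using assms(2,3,5) by (rule sum_strict_mono)
  also have "\<dots> = \<eta> * card S"
    using sum.group[OF assms(1,2,4), of "\<lambda>_. 1 :: real"] by (simp add: sum_distrib_left[symmetric])
  finally show ?thesis .
qed

section \<open>Concentration of the count\<close>

definition centred_count ::
    "nat \<Rightarrow> real \<Rightarrow> nat \<Rightarrow> nat \<Rightarrow> igraph \<Rightarrow> int \<Rightarrow> int set \<Rightarrow> (int set \<Rightarrow> bool) \<Rightarrow> real" where
  "centred_count N \<gamma> L k g r I \<omega> = (\<Sum>i\<in>I. of_bool (ball_iso_at N L k g r i \<omega>)
     - measure (P_N N \<gamma>) {\<omega>' \<in> space (P_N N \<gamma>). ball_iso_at N L k g r i \<omega>'})"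

lemma prob_centred_count_residue_class_ge:
  fixes \<eta> :: real
  assumes "0 < k" "0 < L" "2 * k * L + 1 \<le> N" "0 \<le> \<eta>" "c \<in> {0..<int (2 * k * L + 1)}"
  defines "I \<equiv> residue_class N (2 * k * L + 1) c"
  shows "measure (P_N N \<gamma>) {\<omega> \<in> space (P_N N \<gamma>). \<eta> * card I \<le> \<bar>centred_count N \<gamma> L k g r I \<omega>\<bar>}
    \<le> 2 * exp (- 2 * \<eta>\<^sup>2 * real (N div (2 * k * L + 1)))"
proof -
  interpret prob_space "P_N N \<gamma>"
    unfolding P_N_def by (rule prob_space_edge_law)
  define m where "m = 2 * k * L + 1"
  define X where "X = (\<lambda>i \<omega>. of_bool (ball_iso_at N L k g r i \<omega>) :: real)"
  have "0 < m" "m \<le> N" "3 \<le> m"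
    using assms(1-3) by (auto simp: m_def)
  have I_eq: "I = residue_class N m c"
    by (simp add: I_def m_def)
  have card: "N div m \<le> card I"
    unfolding I_def m_def using assms(5) by (intro card_residue_class_ge) auto
  moreover have "0 < N div m"
    using \<open>0 < m\<close> \<open>m \<le> N\<close> by (simp add: div_greater_zero_iff)
  ultimately have "I \<noteq> {}"
    by auto
  have "{1, 3} \<in> pairs_fin N"
    using \<open>3 \<le> m\<close> \<open>m \<le> N\<close> unfolding pairs_fin_def by (intro CollectI exI[of _ 1] exI[of _ 3]) simp
  then have "pairs_fin N \<noteq> {}"
    by blast
  moreover have "2 * (int k * int L) + 1 \<le> \<bar>i - j\<bar>" if "i \<in> I" "j \<in> I" "i \<noteq> j" for i j
  proof -
    have "int m \<le> \<bar>(i - 1) - (j - 1)\<bar>"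
      using that \<open>0 < m\<close> by (intro residue_class_dist_ge) (auto simp: I_eq residue_class_def)
    then show ?thesis
      by (simp add: m_def)
  qed
  ultimately have indep: "indep_vars (\<lambda>_. borel) X I"
    unfolding X_def by (rule indep_vars_ball_iso_at)
  have "finite I"
    by (simp add: I_def finite_residue_class)
  from Hoeffding_abs_ge_unit_interval[OF this \<open>I \<noteq> {}\<close> indep _ assms(4)]
  have "prob {\<omega> \<in> space (P_N N \<gamma>). \<eta> * card I \<le> \<bar>centred_count N \<gamma> L k g r I \<omega>\<bar>}
      \<le> 2 * exp (- 2 * \<eta>\<^sup>2 * card I)"
    by (simp add: centred_count_def X_def sum_subtractf expectation_ball_iso_at)
  also have "\<dots> \<le> 2 * exp (- 2 * \<eta>\<^sup>2 * real (N div m))"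
    using card by (simp add: mult_left_mono)
  finally show ?thesis
    by (simp add: m_def)
qed

lemma abs_count_iso_div_minus_mu_less:
  fixes \<epsilon> \<eta> :: real
  assumes "0 < m" "0 < N" "\<eta> * real N + 2 * real k * real L \<le> \<epsilon> * real N"
    and "\<And>c. c \<in> {0..<int m} \<Longrightarrow>
      \<bar>centred_count N \<gamma> L k g r (residue_class N m c) \<omega>\<bar> < \<eta> * card (residue_class N m c)"
  shows "\<bar>real (count_iso N L k g r \<omega>) / real N - mu \<gamma> L k g r\<bar> < \<epsilon>"
proof -
  define p where "p i = measure (P_N N \<gamma>) {\<omega> \<in> space (P_N N \<gamma>). ball_iso_at N L k g r i \<omega>}" for i
  have "(\<lambda>i. (i - 1) mod int m) ` {1..int N} \<subseteq> {0..<int m}"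
    using assms(1) by auto
  from abs_sum_less_if_classes[OF _ _ _ this assms(4)[unfolded centred_count_def residue_class_def]]
  have "\<bar>\<Sum>i\<in>{1..int N}. of_bool (ball_iso_at N L k g r i \<omega>) - p i\<bar> < \<eta> * real N"
    using assms(1) by (simp add: p_def)
  moreover have "\<bar>(\<Sum>i\<in>{1..int N}. p i) - real N * mu \<gamma> L k g r\<bar> \<le> 2 * real k * real L"
    unfolding p_def by (rule sum_prob_ball_iso_at_near_mu)
  moreover have "real (count_iso N L k g r \<omega>) - real N * mu \<gamma> L k g r
      = (\<Sum>i\<in>{1..int N}. of_bool (ball_iso_at N L k g r i \<omega>) - p i)
        + ((\<Sum>i\<in>{1..int N}. p i) - real N * mu \<gamma> L k g r)"
    by (simp add: count_iso_eq_sum sum_subtractf)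
  ultimately have "\<bar>real (count_iso N L k g r \<omega>) - real N * mu \<gamma> L k g r\<bar> < \<epsilon> * real N"
    using assms(3) by linarith
  moreover have "real (count_iso N L k g r \<omega>) / real N - mu \<gamma> L k g r
      = (real (count_iso N L k g r \<omega>) - real N * mu \<gamma> L k g r) / real N"
    using assms(2) by (simp add: field_simps)
  ultimately show ?thesis
    using assms(2) by (simp add: abs_divide pos_divide_less_eq)
qed

lemma prob_count_iso_deviation_le:
  fixes \<epsilon> \<eta> :: real
  assumes "0 < k" "0 < L" "2 * k * L + 1 \<le> N" "0 \<le> \<eta>"
    and "\<eta> * real N + 2 * real k * real L \<le> \<epsilon> * real N"
  shows "measure (P_N N \<gamma>) {\<omega> \<in> space (P_N N \<gamma>).
      \<bar>real (count_iso N L k g r \<omega>) / real N - mu \<gamma> L k g r\<bar> > \<epsilon>}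
    \<le> (2 * real k * real L + 1) * (2 * exp (- 2 * \<eta>\<^sup>2 * real (N div (2 * k * L + 1))))"
proof -
  interpret prob_space "P_N N \<gamma>"
    unfolding P_N_def by (rule prob_space_edge_law)
  define m where "m = 2 * k * L + 1"
  define B where "B c = {\<omega> \<in> space (P_N N \<gamma>).
    \<eta> * card (residue_class N m c) \<le> \<bar>centred_count N \<gamma> L k g r (residue_class N m c) \<omega>\<bar>}" for c
  have events: "A \<in> events" if "A \<subseteq> space (P_N N \<gamma>)" for A
    using that sets_edge_law_finite[OF finite_pairs_fin, of \<gamma> N] by (auto simp: P_N_def)
  have "0 < m" "0 < N"
    using assms(3) by (auto simp: m_def)
  have "\<omega> \<in> (\<Union>c\<in>{0..<int m}. B c)"
    if "\<omega> \<in> space (P_N N \<gamma>)" "\<bar>real (count_iso N L k g r \<omega>) / real N - mu \<gamma> L k g r\<bar> > \<epsilon>" for \<omega>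
  proof (rule ccontr)
    assume "\<omega> \<notin> (\<Union>c\<in>{0..<int m}. B c)"
    then have "\<bar>centred_count N \<gamma> L k g r (residue_class N m c) \<omega>\<bar> < \<eta> * card (residue_class N m c)"
      if "c \<in> {0..<int m}" for c
      using that \<open>\<omega> \<in> space (P_N N \<gamma>)\<close> by (auto simp: B_def not_le)
    from abs_count_iso_div_minus_mu_less[OF \<open>0 < m\<close> \<open>0 < N\<close> assms(5) this] show False
      using that(2) by simp
  qed
  then have "{\<omega> \<in> space (P_N N \<gamma>). \<bar>real (count_iso N L k g r \<omega>) / real N - mu \<gamma> L k g r\<bar> > \<epsilon>}
      \<subseteq> (\<Union>c\<in>{0..<int m}. B c)"
    by blast
  then have "prob {\<omega> \<in> space (P_N N \<gamma>).
      \<bar>real (count_iso N L k g r \<omega>) / real N - mu \<gamma> L k g r\<bar> > \<epsilon>}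
      \<le> prob (\<Union>c\<in>{0..<int m}. B c)"
    by (intro finite_measure_mono events) (auto simp: B_def)
  also have "\<dots> \<le> (\<Sum>c\<in>{0..<int m}. prob (B c))"
    by (intro finite_measure_subadditive_finite) (auto simp: B_def intro!: events)
  also have "\<dots> \<le> (\<Sum>c\<in>{0..<int m}. 2 * exp (- 2 * \<eta>\<^sup>2 * real (N div m)))"
    unfolding B_def m_def using assms(1-4)
    by (intro sum_mono prob_centred_count_residue_class_ge) auto
  also have "\<dots> = (2 * real k * real L + 1) * (2 * exp (- 2 * \<eta>\<^sup>2 * real (N div m)))"
    by (simp add: m_def)
  finally show ?thesis
    by (simp add: m_def)
qed

lemma real_div_minus_one_le:
  assumes "0 < m"
  shows "real n / real m - 1 \<le> real (n div m)"
proof -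
  have "real (n mod m) / real m \<le> 1"
    using assms by simp
  then show ?thesis
    using of_nat_of_nat_div_aux[where 'a = real, of n m] by linarith
qed

lemma mult_exp_less_exp_if_large:
  fixes m \<epsilon> N q :: real
  assumes "0 < m" "0 < \<epsilon>" "N / m - 1 \<le> q" "8 * m\<^sup>2 / (5 * \<epsilon>\<^sup>2) + 2 * m < N"
  shows "m * exp (- 2 * (3 * \<epsilon> / 4)\<^sup>2 * q) < exp (- (\<epsilon>\<^sup>2 * N / (2 * m)))"
proof -
  have "5 / 8 * \<epsilon>\<^sup>2 * ((8 * m\<^sup>2 / (5 * \<epsilon>\<^sup>2) + 2 * m) / m) < 5 / 8 * \<epsilon>\<^sup>2 * (N / m)"
    using assms by (intro mult_strict_left_mono divide_strict_right_mono) auto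
  also have "5 / 8 * \<epsilon>\<^sup>2 * ((8 * m\<^sup>2 / (5 * \<epsilon>\<^sup>2) + 2 * m) / m) = m + 5 / 4 * \<epsilon>\<^sup>2"
    using assms(1,2) by (simp add: field_simps power2_eq_square)
  finally have large: "m + 5 / 4 * \<epsilon>\<^sup>2 < 5 / 8 * (\<epsilon>\<^sup>2 * (N / m))"
    by simp
  have "\<epsilon>\<^sup>2 * (N / m - 1) \<le> \<epsilon>\<^sup>2 * q"
    using assms(3) by (intro mult_left_mono) auto
  then have "\<epsilon>\<^sup>2 * (N / m) - \<epsilon>\<^sup>2 \<le> \<epsilon>\<^sup>2 * q"
    unfolding right_diff_distrib mult_1_right .
  moreover have "- 2 * (3 * \<epsilon> / 4)\<^sup>2 * q = - 9 / 8 * (\<epsilon>\<^sup>2 * q)"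
    by (simp add: power2_eq_square)
  ultimately have "- 2 * (3 * \<epsilon> / 4)\<^sup>2 * q \<le> - 9 / 8 * (\<epsilon>\<^sup>2 * (N / m)) + 9 / 8 * \<epsilon>\<^sup>2"
    by linarith
  moreover have "\<epsilon>\<^sup>2 * N / (2 * m) = 1 / 2 * (\<epsilon>\<^sup>2 * (N / m))"
    by simp
  ultimately have "ln m + (- 2 * (3 * \<epsilon> / 4)\<^sup>2 * q) < - (\<epsilon>\<^sup>2 * N / (2 * m))"
    using ln_less_self[OF assms(1)] large zero_le_power2[of \<epsilon>] by linarith
  moreover have "m * exp (- 2 * (3 * \<epsilon> / 4)\<^sup>2 * q) = exp (ln m + (- 2 * (3 * \<epsilon> / 4)\<^sup>2 * q))"
    using assms(1) by (simp only: exp_add exp_ln)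
  ultimately show ?thesis
    by (simp only: exp_less_cancel_iff)
qed

lemma prob_count_iso_deviation_less:
  fixes \<epsilon> :: real
  assumes "0 < k" "0 < L" "0 < \<epsilon>"
    and large: "8 * (2 * real k * real L + 1)\<^sup>2 / (5 * \<epsilon>\<^sup>2) + 2 * (2 * real k * real L + 1) < real N"
      "8 * real k * real L / \<epsilon> \<le> real N"
  shows "measure (P_N N \<gamma>) {\<omega> \<in> space (P_N N \<gamma>).
      \<bar>real (count_iso N L k g r \<omega>) / real N - mu \<gamma> L k g r\<bar> > \<epsilon>}
    < 2 * exp (- (\<epsilon>\<^sup>2 * real N / (8 * real k * real L + 2)))"
proof -
  define m where "m = 2 * real k * real L + 1"
  have "0 < m" and m_eq: "real (2 * k * L + 1) = m"
    by (simp_all add: m_def add_nonneg_pos)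
  moreover have "0 \<le> 8 * m\<^sup>2 / (5 * \<epsilon>\<^sup>2)"
    by simp
  ultimately have "real (2 * k * L + 1) < real N"
    using large(1)[folded m_def] unfolding m_eq by linarith
  then have "2 * k * L + 1 \<le> N"
    by (simp only: of_nat_less_iff)
  have "8 * real k * real L \<le> \<epsilon> * real N"
    using large(2) assms(3) by (simp add: pos_divide_le_eq mult.commute)
  then have "3 * \<epsilon> / 4 * real N + 2 * real k * real L \<le> \<epsilon> * real N"
    by linarith
  with \<open>2 * k * L + 1 \<le> N\<close> have "measure (P_N N \<gamma>) {\<omega> \<in> space (P_N N \<gamma>).
      \<bar>real (count_iso N L k g r \<omega>) / real N - mu \<gamma> L k g r\<bar> > \<epsilon>}
    \<le> m * (2 * exp (- 2 * (3 * \<epsilon> / 4)\<^sup>2 * real (N div (2 * k * L + 1))))"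
    using assms(1-3) unfolding m_def by (intro prob_count_iso_deviation_le) auto
  also have "\<dots> < 2 * exp (- (\<epsilon>\<^sup>2 * real N / (2 * m)))"
  proof -
    have "real N / m - 1 \<le> real (N div (2 * k * L + 1))"
      using real_div_minus_one_le[of "2 * k * L + 1" N] unfolding m_eq by simp
    from mult_exp_less_exp_if_large[OF \<open>0 < m\<close> assms(3) this large(1)[folded m_def]] show ?thesis
      by simp
  qed
  also have "\<dots> \<le> 2 * exp (- (\<epsilon>\<^sup>2 * real N / (8 * real k * real L + 2)))"
  proof -
    have "\<epsilon>\<^sup>2 * real N / (8 * real k * real L + 2) \<le> \<epsilon>\<^sup>2 * real N / (2 * m)"
      using \<open>0 < m\<close> by (intro divide_left_mono) (auto simp: m_def intro!: mult_pos_pos add_nonneg_pos)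
    then show ?thesis
      by simp
  qed
  finally show ?thesis .
qed

theorem lemma9:
  fixes \<gamma> \<epsilon> :: real and k L :: nat and g :: igraph and r :: int
  assumes "\<gamma> > 0" and "k > 0" and "L > 0" and "\<epsilon> > 0"
    and "is_rooted_graph g r"
  shows "\<exists>N0. \<forall>N\<ge>N0.
    measure (P_N N \<gamma>)
      {\<omega> \<in> space (P_N N \<gamma>).
         \<bar>real (count_iso N L k g r \<omega>) / real N - mu \<gamma> L k g r\<bar> > \<epsilon>}
    < 2 * exp (- (\<epsilon>\<^sup>2 * real N / (8 * real k * real L + 2)))"
proof -
  define m where "m = 2 * real k * real L + 1"
  obtain N0 :: nat where N0: "8 * m\<^sup>2 / (5 * \<epsilon>\<^sup>2) + 2 * m + 8 * real k * real L / \<epsilon> < real N0"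
    using reals_Archimedean2 by blast
  have "0 \<le> 8 * m\<^sup>2 / (5 * \<epsilon>\<^sup>2)" "0 \<le> m" "0 \<le> 8 * real k * real L / \<epsilon>"
    using assms(4) by (simp_all add: m_def)
  with N0 have "8 * m\<^sup>2 / (5 * \<epsilon>\<^sup>2) + 2 * m < real N" "8 * real k * real L / \<epsilon> \<le> real N"
    if "N0 \<le> N" for N
    using that by (smt (verit) of_nat_le_iff)+
  then show ?thesis
    using assms(2-4) unfolding m_def by (blast intro: prob_count_iso_deviation_less)
qed

end
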